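(* Let $a,b\ge1$, $\nu$ a permutation of $[a]$, and $x\in[a]\times[b]$. Let $A(i,j)=(a+1-i,\,b+1-j)$, and for $I\in J(\mathcal{Q}_{a,b})$ let $\mathbf{1}_I$ be the indicator function of $I$. Then $h(I)=\mathbf{1}_I(x)-\big(1-\mathbf{1}_I(A(x))\big)$ is $0$-mesic for $\mathcal{T}_\nu$ acting on $J(\mathcal{Q}_{a,b})$; that is, along every orbit the number of ideals containing $x$ equals the number of ideals not containing $A(x)$.
   Context: $J(P)$ is the set of order ideals of a finite poset $P$. Toggle: $\sigma_x(I)=I\cup\{x\}$ if $x\notin I$ and $I\cup\{x\}\in J(P)$; $I\setminus\{x\}$ if $x\in I$ and $I\setminus\{x\}\in J(P)$; $I$ otherwise. For a chain $C=\{x_1<\dots<x_m\}$, $\sigma_C=\sigma_{x_1}\circ\cdots\circ\sigma_{x_m}$. $\mathcal{Q}_{a,b}=[a]\times[b]$ with componentwise order; columns $C_c=\{(c,j): j\in[b]\}$; comotion $\mathcal{T}_\nu=\sigma_{C_{\nu(a)}}\circ\cdots\circ\sigma_{C_{\nu(1)}}$. A function is $0$-mesic for a permutation $\tau$ of a finite set if its average over every $\tau$-orbit is $0$. *)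

theory Defs
  imports Complex_Main "HOL-Combinatorics.Permutations"
begin

definition Q :: "nat \<Rightarrow> nat \<Rightarrow> (nat \<times> nat) set" where
  "Q a b = {1..a} \<times> {1..b}"

definition qle :: "nat \<times> nat \<Rightarrow> nat \<times> nat \<Rightarrow> bool" where
  "qle x y \<longleftrightarrow> fst x \<le> fst y \<and> snd x \<le> snd y"

definition is_ideal :: "nat \<Rightarrow> nat \<Rightarrow> (nat \<times> nat) set \<Rightarrow> bool" where
  "is_ideal a b I \<longleftrightarrow> I \<subseteq> Q a b \<and>
     (\<forall>x\<in>I. \<forall>y\<in>Q a b. qle y x \<longrightarrow> y \<in> I)"

definition J :: "nat \<Rightarrow> nat \<Rightarrow> (nat \<times> nat) set set" where
  "J a b = {I. is_ideal a b I}"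

definition toggle :: "nat \<Rightarrow> nat \<Rightarrow> nat \<times> nat \<Rightarrow> (nat \<times> nat) set \<Rightarrow> (nat \<times> nat) set" where
  "toggle a b x I =
     (if x \<notin> I \<and> is_ideal a b (insert x I) then insert x I
      else if x \<in> I \<and> is_ideal a b (I - {x}) then I - {x}
      else I)"

definition toggle_chain :: "nat \<Rightarrow> nat \<Rightarrow> (nat \<times> nat) list \<Rightarrow> (nat \<times> nat) set \<Rightarrow> (nat \<times> nat) set" where
  "toggle_chain a b xs = foldr (\<lambda>x f. toggle a b x \<circ> f) xs id"

definition col_toggle :: "nat \<Rightarrow> nat \<Rightarrow> nat \<Rightarrow> (nat \<times> nat) set \<Rightarrow> (nat \<times> nat) set" where
  "col_toggle a b c = toggle_chain a b (map (\<lambda>j. (c, j)) [1..<b+1])"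

(* comotion T_nu = sigma_{C_nu(a)} o ... o sigma_{C_nu(1)} *)
definition comotion :: "nat \<Rightarrow> nat \<Rightarrow> (nat \<Rightarrow> nat) \<Rightarrow> (nat \<times> nat) set \<Rightarrow> (nat \<times> nat) set" where
  "comotion a b nu = foldr (\<lambda>c f. col_toggle a b (nu c) \<circ> f) (rev [1..<a+1]) id"

definition orbit_of :: "('s \<Rightarrow> 's) \<Rightarrow> 's \<Rightarrow> 's set" where
  "orbit_of T s = {(T ^^ k) s | k. True}"

definition zero_mesic :: "('s \<Rightarrow> 's) \<Rightarrow> 's set \<Rightarrow> ('s \<Rightarrow> real) \<Rightarrow> bool" where
  "zero_mesic T S h \<longleftrightarrow>
     (\<forall>s\<in>S. (\<Sum>t\<in>orbit_of T s. h t) / real (card (orbit_of T s)) = 0)"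

definition antipode :: "nat \<Rightarrow> nat \<Rightarrow> nat \<times> nat \<Rightarrow> nat \<times> nat" where
  "antipode a b x = (a + 1 - fst x, b + 1 - snd x)"

definition ind :: "'x set \<Rightarrow> 'x \<Rightarrow> real" where
  "ind I x = (if x \<in> I then 1 else 0)"

end

theory Submission
  imports Defs
begin

text \<open>
  An order ideal of the rectangle [a] \<times> [b] is determined by its column heights
  h 1 \<ge> h 2 \<ge> ... \<ge> h a (a "height function"), and toggling column c acts on heights by
  an explicit rule (col_step): raise h c by one if the column to its left permits, otherwise
  drop h c to the height of the column to its right.  Hence the comotion T_nu is the action of
  the word nu(1) ... nu(a) on height functions, and the statistic of the theorem becomes a sum
  of two one-column statistics, at the columns i and a+1-i.

  We show that this statistic sums to zero over every period, in three steps: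
  (1) for the standard word 1 ... a the action either raises all columns or shifts them to
      the left; counting the columns that reach a given anti-diagonal (reach_count) shows that
      i+b-j steps later the antipodal term is the negation of the first term, so the statistic
      is a coboundary up to a time shift;
  (2) the property survives commuting two non-adjacent letters of the word, and moving the
      last letter to the front (this conjugates the action by one column step, which changes
      a two-column statistic only by a coboundary);
  (3) these moves connect every arrangement of 1 ... a to the sorted one.
  Finally, since the action is injective on the finite set of height functions, vanishing
  sums over periods are the same as vanishing orbit averages, and the bijection between
  height functions and order ideals transports this to J(Q_{a,b}).
\<close>

section \<open>Order ideals as height functions\<close>

definition height_fn :: "nat \<Rightarrow> nat \<Rightarrow> (nat \<Rightarrow> nat) \<Rightarrow> bool" where
  "height_fn a b h \<longleftrightarrow> (\<forall>c. (c = 0 \<or> a < c) \<longrightarrow> h c = 0) \<and> (\<forall>c. h c \<le> b) \<and>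
     (\<forall>c d. 1 \<le> c \<longrightarrow> c \<le> d \<longrightarrow> d \<le> a \<longrightarrow> h d \<le> h c)"

definition ideal_of :: "nat \<Rightarrow> (nat \<Rightarrow> nat) \<Rightarrow> (nat \<times> nat) set" where
  "ideal_of a h = {(c,j). 1 \<le> c \<and> c \<le> a \<and> 1 \<le> j \<and> j \<le> h c}"

lemma ideal_of_mem [simp]: "(c,j) \<in> ideal_of a h \<longleftrightarrow> 1 \<le> c \<and> c \<le> a \<and> 1 \<le> j \<and> j \<le> h c"
  by (simp add: ideal_of_def)

lemma height_fn_at_zero: "height_fn a b h \<Longrightarrow> h 0 = 0"
  by (simp add: height_fn_def)

lemma height_fn_zero_beyond: "height_fn a b h \<Longrightarrow> a < c \<Longrightarrow> h c = 0"
  by (simp add: height_fn_def)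

lemma height_fn_bound: "height_fn a b h \<Longrightarrow> h c \<le> b"
  by (simp add: height_fn_def)

lemma height_fn_mono: "height_fn a b h \<Longrightarrow> 1 \<le> c \<Longrightarrow> c \<le> d \<Longrightarrow> d \<le> a \<Longrightarrow> h d \<le> h c"
  unfolding height_fn_def by blast

lemma ideal_of_is_ideal:
  assumes h: "height_fn a b h"
  shows "is_ideal a b (ideal_of a h)"
  unfolding is_ideal_def
proof (intro conjI ballI impI)
  show "ideal_of a h \<subseteq> Q a b"
  proof (clarify)
    fix c j assume "(c, j) \<in> ideal_of a h"
    then show "(c, j) \<in> Q a b" using height_fn_bound[OF h, of c] by (simp add: Q_def)
  qed
next
  fix x y assume x: "x \<in> ideal_of a h" and y: "y \<in> Q a b" and le: "qle y x"
  obtain c j c' j' where xy: "x = (c,j)" "y = (c',j')" by (cases x, cases y)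
  with x y le have "1 \<le> c'" "c' \<le> c" "c \<le> a" "1 \<le> j'" "j' \<le> j" "j \<le> h c"
    by (auto simp: Q_def qle_def)
  moreover have "h c \<le> h c'" using height_fn_mono[OF h] calculation by blast
  ultimately show "y \<in> ideal_of a h" using xy by simp
qed

text \<open>A down-closed subset of [1,n] is an initial segment; this is what makes a column of
  an order ideal determined by its size.\<close>
lemma downclosed_is_interval:
  assumes sub: "A \<subseteq> {1..(n::nat)}" and dc: "\<And>x y. x \<in> A \<Longrightarrow> 1 \<le> y \<Longrightarrow> y \<le> x \<Longrightarrow> y \<in> A"
  shows "A = {1..card A}"
proof (rule set_eqI)
  fix k
  have fin: "finite A" using sub finite_subset by blast
  have upper: "k \<le> card A" if "k \<in> A"
  proof -
    have "{1..k} \<subseteq> A" using dc that by auto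
    then have "card {1..k} \<le> card A" by (rule card_mono[OF fin])
    then show ?thesis by simp
  qed
  have lower: "k \<in> A" if k: "1 \<le> k" "k \<le> card A"
  proof (rule ccontr)
    assume "k \<notin> A"
    have "A \<subseteq> {1..<k}"
    proof
      fix x assume "x \<in> A"
      then have "1 \<le> x" "\<not> k \<le> x" using sub dc[of x k] k(1) \<open>k \<notin> A\<close> by auto
      then show "x \<in> {1..<k}" by simp
    qed
    then have "card A \<le> card {1..<k}" by (rule card_mono[rotated]) simp
    then show False using k by simp
  qed
  show "k \<in> A \<longleftrightarrow> k \<in> {1..card A}"
    using upper lower sub by (auto simp only: atLeastAtMost_iff subset_iff)
qed

lemma ideal_is_ideal_of:
  assumes I: "is_ideal a b I"
  shows "\<exists>h. height_fn a b h \<and> I = ideal_of a h"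
proof -
  define A where "A c = {j. (c,j) \<in> I}" for c
  define h where "h c = (if 1 \<le> c \<and> c \<le> a then card (A c) else 0)" for c
  have IQ: "I \<subseteq> Q a b" and down: "\<And>x y. x \<in> I \<Longrightarrow> y \<in> Q a b \<Longrightarrow> qle y x \<Longrightarrow> y \<in> I"
    using I unfolding is_ideal_def by blast+
  have A_sub: "A c \<subseteq> {1..b}" for c using IQ by (auto simp: A_def Q_def)
  have A_anti: "A d \<subseteq> A c" if "1 \<le> c" "c \<le> d" for c d
    using that IQ down[of "(d,_)" "(c,_)"] by (auto simp: A_def Q_def qle_def)
  have "A c = {1..card (A c)}" for c
  proof (rule downclosed_is_interval[OF A_sub])
    fix x y assume "x \<in> A c" "1 \<le> y" "y \<le> x"
    then show "y \<in> A c" using IQ down[of "(c,x)" "(c,y)"] by (auto simp: A_def Q_def qle_def)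
  qed
  then have A_mem: "j \<in> A c \<longleftrightarrow> 1 \<le> j \<and> j \<le> card (A c)" for j c
    by (metis atLeastAtMost_iff)
  have "card (A c) \<le> b" for c using card_mono[OF _ A_sub[of c]] by simp
  moreover have "card (A d) \<le> card (A c)" if "1 \<le> c" "c \<le> d" for c d
    using card_mono[OF finite_subset[OF A_sub] A_anti[OF that]] by simp
  ultimately have "height_fn a b h"
    unfolding height_fn_def h_def by auto
  moreover have "I = ideal_of a h"
  proof (rule set_eqI)
    fix x :: "nat \<times> nat"
    obtain c j where x: "x = (c,j)" by (cases x)
    have "x \<in> I \<longleftrightarrow> (1 \<le> c \<and> c \<le> a) \<and> j \<in> A c" using IQ x by (auto simp: A_def Q_def)
    then show "x \<in> I \<longleftrightarrow> x \<in> ideal_of a h" using A_mem[of j c] x by (auto simp: h_def)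
  qed
  ultimately show ?thesis by blast
qed

text \<open>Distinct height functions give distinct ideals: the top cell of a column tells its height.\<close>
lemma ideal_of_inj:
  assumes h: "height_fn a b h" and h': "height_fn a b h'" and eq: "ideal_of a h = ideal_of a h'"
  shows "h = h'"
proof
  fix c show "h c = h' c"
  proof (cases "1 \<le> c \<and> c \<le> a")
    case False
    then show ?thesis using h h' by (cases "c = 0") (auto simp: height_fn_at_zero height_fn_zero_beyond)
  next
    case True
    have "(c, h' c) \<in> ideal_of a h \<longleftrightarrow> (c, h' c) \<in> ideal_of a h'"
      "(c, h c) \<in> ideal_of a h \<longleftrightarrow> (c, h c) \<in> ideal_of a h'" using eq by simp_all
    with True show ?thesis by (cases "h c = 0"; cases "h' c = 0") auto
  qed
qed

text \<open>There are finitely many height functions, since ideal_of embeds them into subsets of Q a b.\<close>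
lemma finite_height_fns: "finite {h. height_fn a b h}"
proof (rule finite_imageD)
  show "inj_on (ideal_of a) {h. height_fn a b h}" using ideal_of_inj by (auto simp: inj_on_def)
  have "ideal_of a ` {h. height_fn a b h} \<subseteq> Pow (Q a b)"
    using ideal_of_is_ideal by (auto simp: is_ideal_def)
  then show "finite (ideal_of a ` {h. height_fn a b h})"
    by (rule finite_subset) (simp add: Q_def)
qed

section \<open>Single toggles in terms of heights\<close>

lemma ideal_of_insert:
  assumes "1 \<le> c" "c \<le> a" "1 \<le> j" "h c = j - 1"
  shows "insert (c,j) (ideal_of a h) = ideal_of a (h(c := j))"
proof (rule set_eqI)
  fix x :: "nat \<times> nat"
  obtain c' j' where x: "x = (c',j')" by (cases x)
  show "x \<in> insert (c,j) (ideal_of a h) \<longleftrightarrow> x \<in> ideal_of a (h(c := j))"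
    using assms unfolding x by (cases "c' = c") auto
qed

lemma ideal_of_remove:
  assumes "1 \<le> j" "h c = j"
  shows "ideal_of a h - {(c,j)} = ideal_of a (h(c := j - 1))"
proof (rule set_eqI)
  fix x :: "nat \<times> nat"
  obtain c' j' where x: "x = (c',j')" by (cases x)
  show "x \<in> ideal_of a h - {(c,j)} \<longleftrightarrow> x \<in> ideal_of a (h(c := j - 1))"
    using assms unfolding x by (cases "c' = c") auto
qed

lemma height_fn_upd:
  assumes v: "height_fn a b h" and c: "1 \<le> c" "c \<le> a" and vb: "w \<le> b"
    and up: "c = 1 \<or> w \<le> h (c-1)" and lo: "c = a \<or> h (c+1) \<le> w"
  shows "height_fn a b (h(c := w))"
  unfolding height_fn_def
proof (intro conjI allI impI)
  fix d assume "d = 0 \<or> a < d"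
  then show "(h(c := w)) d = 0" using c height_fn_at_zero[OF v] height_fn_zero_beyond[OF v] by auto
next
  fix d show "(h(c := w)) d \<le> b" using vb height_fn_bound[OF v] by simp
next
  fix c1 d assume cd: "1 \<le> c1" "c1 \<le> d" "d \<le> a"
  show "(h(c := w)) d \<le> (h(c := w)) c1"
  proof (cases "d = c")
    case True
    show ?thesis
    proof (cases "c1 = c")
      case False
      then have "c1 \<le> c - 1" "c \<noteq> 1" using cd True by auto
      then have "h (c-1) \<le> h c1" using height_fn_mono[OF v, of c1 "c-1"] cd True by simp
      then show ?thesis using up \<open>c \<noteq> 1\<close> True False by simp
    qed (simp add: True)
  next
    case dF: False
    show ?thesis
    proof (cases "c1 = c")
      case True
      then have "c + 1 \<le> d" "c \<noteq> a" using cd dF by auto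
      then have "h d \<le> h (c+1)" using height_fn_mono[OF v, of "c+1" d] cd by simp
      then show ?thesis using lo \<open>c \<noteq> a\<close> True dF by simp
    next
      case False
      then show ?thesis using dF height_fn_mono[OF v, of c1 d] cd by simp
    qed
  qed
qed

lemma toggle_add_iff:
  assumes v: "height_fn a b h" and c: "1 \<le> c" "c \<le> a" and j: "1 \<le> j" "j \<le> b"
  shows "((c,j) \<notin> ideal_of a h \<and> is_ideal a b (insert (c,j) (ideal_of a h))) \<longleftrightarrow>
         (h c = j - 1 \<and> (c = 1 \<or> j \<le> h (c-1)))"
proof
  assume toggleable: "(c,j) \<notin> ideal_of a h \<and> is_ideal a b (insert (c,j) (ideal_of a h))"
  then have hc: "h c < j" using c j by auto
  have down: "\<And>x y. x \<in> insert (c,j) (ideal_of a h) \<Longrightarrow> y \<in> Q a b \<Longrightarrow> qle y x \<Longrightarrow> y \<in> insert (c,j) (ideal_of a h)"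
    using toggleable unfolding is_ideal_def by blast
  have "h c = j - 1"
  proof (cases "j = 1")
    case True then show ?thesis using hc by simp
  next
    case False
    then have "(c, j-1) \<in> Q a b" "qle (c,j-1) (c,j)" using c j by (auto simp: Q_def qle_def)
    then have "(c, j-1) \<in> insert (c,j) (ideal_of a h)" using down by blast
    then have "j - 1 \<le> h c" using False by auto
    then show ?thesis using hc by simp
  qed
  moreover have "c = 1 \<or> j \<le> h (c-1)"
  proof (cases "c = 1")
    case False
    then have "(c-1, j) \<in> Q a b" "qle (c-1,j) (c,j)" using c j by (auto simp: Q_def qle_def)
    then have "(c-1, j) \<in> insert (c,j) (ideal_of a h)" using down by blast
    then have "j \<le> h (c-1)" using False c by auto
    then show ?thesis by simp
  qed simp
  ultimately show "h c = j - 1 \<and> (c = 1 \<or> j \<le> h (c-1))" by simp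
next
  assume cond: "h c = j - 1 \<and> (c = 1 \<or> j \<le> h (c-1))"
  then have "(c,j) \<notin> ideal_of a h" using j by auto
  moreover have "height_fn a b (h(c := j))"
  proof (rule height_fn_upd[OF v c j(2)])
    show "c = 1 \<or> j \<le> h (c-1)" using cond by simp
    show "c = a \<or> h (c+1) \<le> j"
    proof (cases "c = a")
      case False
      then have "h (c+1) \<le> h c" using height_fn_mono[OF v, of c "c+1"] c by simp
      then show ?thesis using cond by (intro disjI2) arith
    qed simp
  qed
  then have "is_ideal a b (insert (c,j) (ideal_of a h))"
    using ideal_of_insert[OF c j(1)] cond ideal_of_is_ideal by simp
  ultimately show "(c,j) \<notin> ideal_of a h \<and> is_ideal a b (insert (c,j) (ideal_of a h))" by simp
qed

lemma toggle_remove_iff: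
  assumes v: "height_fn a b h" and c: "1 \<le> c" "c \<le> a" and j: "1 \<le> j" "j \<le> b"
  shows "((c,j) \<in> ideal_of a h \<and> is_ideal a b (ideal_of a h - {(c,j)})) \<longleftrightarrow>
         (h c = j \<and> (c = a \<or> h (c+1) < j))"
proof
  assume toggleable: "(c,j) \<in> ideal_of a h \<and> is_ideal a b (ideal_of a h - {(c,j)})"
  then have hc: "j \<le> h c" using c j by auto
  have down: "\<And>x y. x \<in> ideal_of a h - {(c,j)} \<Longrightarrow> y \<in> Q a b \<Longrightarrow> qle y x \<Longrightarrow> y \<in> ideal_of a h - {(c,j)}"
    using toggleable unfolding is_ideal_def by blast
  have cQ: "(c,j) \<in> Q a b" using c j by (simp add: Q_def)
  have "h c = j"
  proof (rule ccontr)
    assume "h c \<noteq> j"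
    then have "(c, j+1) \<in> ideal_of a h - {(c,j)}" using hc c j by auto
    moreover have "qle (c,j) (c,j+1)" by (simp add: qle_def)
    ultimately have "(c,j) \<in> ideal_of a h - {(c,j)}" using down cQ by blast
    then show False by simp
  qed
  moreover have "c = a \<or> h (c+1) < j"
  proof (rule ccontr)
    assume "\<not> (c = a \<or> h (c+1) < j)"
    then have "c + 1 \<le> a" "j \<le> h (c+1)" using c by auto
    then have "(c+1, j) \<in> ideal_of a h - {(c,j)}" using c j by auto
    moreover have "qle (c,j) (c+1,j)" by (simp add: qle_def)
    ultimately have "(c,j) \<in> ideal_of a h - {(c,j)}" using down cQ by blast
    then show False by simp
  qed
  ultimately show "h c = j \<and> (c = a \<or> h (c+1) < j)" by simp
next
  assume cond: "h c = j \<and> (c = a \<or> h (c+1) < j)"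
  then have "(c,j) \<in> ideal_of a h" using c j by auto
  moreover have "height_fn a b (h(c := j - 1))"
  proof (rule height_fn_upd[OF v c])
    show "j - 1 \<le> b" using j by simp
    show "c = 1 \<or> j - 1 \<le> h (c-1)"
    proof (cases "c = 1")
      case False
      then have "h c \<le> h (c-1)" using height_fn_mono[OF v, of "c-1" c] c by simp
      then show ?thesis using cond by (intro disjI2) arith
    qed simp
    show "c = a \<or> h (c+1) \<le> j - 1" using cond by auto
  qed
  then have "is_ideal a b (ideal_of a h - {(c,j)})"
    using ideal_of_remove[OF j(1)] cond ideal_of_is_ideal by simp
  ultimately show "(c,j) \<in> ideal_of a h \<and> is_ideal a b (ideal_of a h - {(c,j)})" by simp
qed

lemma toggle_ideal_of:
  assumes v: "height_fn a b h" and c: "1 \<le> c" "c \<le> a" and j: "1 \<le> j" "j \<le> b"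
  shows "toggle a b (c,j) (ideal_of a h) =
    (if h c = j - 1 \<and> (c = 1 \<or> j \<le> h (c-1)) then ideal_of a (h(c := j))
     else if h c = j \<and> (c = a \<or> h (c+1) < j) then ideal_of a (h(c := j - 1))
     else ideal_of a h)"
proof -
  note add = toggle_add_iff[OF v c j] and remove = toggle_remove_iff[OF v c j]
  consider "h c = j - 1 \<and> (c = 1 \<or> j \<le> h (c-1))"
    | "\<not> (h c = j - 1 \<and> (c = 1 \<or> j \<le> h (c-1)))" "h c = j \<and> (c = a \<or> h (c+1) < j)"
    | "\<not> (h c = j - 1 \<and> (c = 1 \<or> j \<le> h (c-1)))" "\<not> (h c = j \<and> (c = a \<or> h (c+1) < j))"
    by blast
  then show ?thesis
  proof cases
    case 1
    then show ?thesis using add ideal_of_insert[OF c j(1)] unfolding toggle_def by simp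
  next
    case 2
    then show ?thesis using add remove ideal_of_remove[OF j(1)] unfolding toggle_def by simp
  next
    case 3
    then show ?thesis using add remove unfolding toggle_def by auto
  qed
qed

section \<open>Column toggles in terms of heights\<close>

definition upper :: "nat \<Rightarrow> (nat \<Rightarrow> nat) \<Rightarrow> nat \<Rightarrow> nat" where
  "upper b h c = (if c = 1 then b else h (c-1))"

text \<open>The effect of toggling column c: raise it by one if possible, otherwise drop it to
  the height of the column to its right.\<close>
definition col_step :: "nat \<Rightarrow> nat \<Rightarrow> (nat \<Rightarrow> nat) \<Rightarrow> (nat \<Rightarrow> nat)" where
  "col_step b c h = h(c := if h c < upper b h c then h c + 1 else h (c+1))"

lemma upper_bounds:
  assumes v: "height_fn a b h" and c: "1 \<le> c" "c \<le> a"
  shows "h c \<le> upper b h c" "upper b h c \<le> b"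
proof -
  show "h c \<le> upper b h c"
  proof (cases "c = 1")
    case True then show ?thesis using height_fn_bound[OF v] by (simp add: upper_def)
  next
    case False then show ?thesis using height_fn_mono[OF v, of "c-1" c] c by (simp add: upper_def)
  qed
  show "upper b h c \<le> b" using height_fn_bound[OF v] by (simp add: upper_def)
qed

lemma height_fn_next_le:
  assumes v: "height_fn a b h" and c: "1 \<le> c" "c \<le> a"
  shows "h (c+1) \<le> h c"
proof (cases "c = a")
  case True then show ?thesis using height_fn_zero_beyond[OF v, of "c+1"] by simp
next
  case False then show ?thesis using height_fn_mono[OF v, of c "c+1"] c by simp
qed

lemma height_fn_col_step:
  assumes v: "height_fn a b h" and c: "1 \<le> c" "c \<le> a"
  shows "height_fn a b (col_step b c h)"
proof (cases "h c < upper b h c")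
  case True
  have "height_fn a b (h(c := h c + 1))"
  proof (rule height_fn_upd[OF v c])
    show "h c + 1 \<le> b" using True upper_bounds[OF v c] by simp
    show "c = 1 \<or> h c + 1 \<le> h (c - 1)" using True by (cases "c = 1") (auto simp: upper_def)
    show "c = a \<or> h (c + 1) \<le> h c + 1" using height_fn_next_le[OF v c] by simp
  qed
  then show ?thesis using True by (simp add: col_step_def)
next
  case False
  have "height_fn a b (h(c := h (c+1)))"
  proof (rule height_fn_upd[OF v c])
    show "h (c+1) \<le> b" using height_fn_bound[OF v] .
    show "c = 1 \<or> h (c+1) \<le> h (c - 1)"
    proof (cases "c = 1")
      case False
      then have "h c \<le> h (c-1)" using height_fn_mono[OF v, of "c-1" c] c by simp
      then show ?thesis using height_fn_next_le[OF v c] by (intro disjI2) arith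
    qed simp
    show "c = a \<or> h (c + 1) \<le> h (c+1)" by simp
  qed
  then show ?thesis using False by (simp add: col_step_def)
qed

text \<open>Toggling the cells (c,m), ..., (c,b) of column c, top cell first; the column toggle is the
  case m = 1.\<close>
definition col_toggle_from :: "nat \<Rightarrow> nat \<Rightarrow> nat \<Rightarrow> nat \<Rightarrow> (nat \<times> nat) set \<Rightarrow> (nat \<times> nat) set" where
  "col_toggle_from a b c m = foldr (\<lambda>x f. toggle a b x \<circ> f) (map (\<lambda>j. (c, j)) [m..<b+1]) id"

lemma col_toggle_from_step:
  assumes "m \<le> b"
  shows "col_toggle_from a b c m X = toggle a b (c,m) (col_toggle_from a b c (Suc m) X)"
proof -
  have "[m..<b+1] = m # [Suc m..<b+1]" by (rule upt_conv_Cons) (use assms in simp)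
  then show ?thesis unfolding col_toggle_from_def by simp
qed

lemma col_toggle_from_end: "col_toggle_from a b c (b+1) X = X"
  by (simp add: col_toggle_from_def)

lemma col_toggle_eq_from: "col_toggle a b c = col_toggle_from a b c 1"
  by (simp add: col_toggle_def toggle_chain_def col_toggle_from_def)

lemma col_toggle_from_idle:
  assumes v: "height_fn a b h" and c: "1 \<le> c" "c \<le> a"
    and range: "1 \<le> lo" "lo \<le> hi" "hi \<le> b+1" and top: "col_toggle_from a b c hi X = ideal_of a h"
    and no_add: "\<And>m. lo \<le> m \<Longrightarrow> m < hi \<Longrightarrow> \<not> (h c = m - 1 \<and> (c = 1 \<or> m \<le> h (c-1)))"
    and no_remove: "\<And>m. lo \<le> m \<Longrightarrow> m < hi \<Longrightarrow> \<not> (h c = m \<and> (c = a \<or> h (c+1) < m))"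
  shows "col_toggle_from a b c lo X = ideal_of a h"
  using range(2)
proof (induction rule: inc_induct)
  case base then show ?case using top .
next
  case (step m)
  then have m: "1 \<le> m" "m \<le> b" using range by auto
  have "\<not> (h c = m - 1 \<and> (c = 1 \<or> m \<le> h (c-1)))" "\<not> (h c = m \<and> (c = a \<or> h (c+1) < m))"
    using no_add[of m] no_remove[of m] step(1,2) by auto
  then have "toggle a b (c,m) (ideal_of a h) = ideal_of a h"
    by (simp only: toggle_ideal_of[OF v c m] if_not_P if_False)
  then show ?case using col_toggle_from_step[OF m(2), of a c X] step(3) by simp
qed

lemma col_toggle_raise:
  assumes v: "height_fn a b h" and c: "1 \<le> c" "c \<le> a" and grow: "h c < upper b h c"
  shows "col_toggle a b c (ideal_of a h) = ideal_of a (h(c := h c + 1))"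
proof -
  define h' where "h' = h(c := h c + 1)"
  have v': "height_fn a b h'" using height_fn_col_step[OF v c] grow by (simp add: col_step_def h'_def)
  have top: "h c + 1 \<le> b" using grow upper_bounds[OF v c] by simp
  have above: "col_toggle_from a b c (h c + 2) (ideal_of a h) = ideal_of a h"
    by (rule col_toggle_from_idle[OF v c _ _ _ col_toggle_from_end]) (use top in auto)
  have "col_toggle_from a b c (h c + 1) (ideal_of a h) = toggle a b (c, h c + 1) (ideal_of a h)"
    using col_toggle_from_step[OF top, of a c] above by simp
  also have "\<dots> = ideal_of a h'"
    using toggle_ideal_of[OF v c _ top] grow by (auto simp: h'_def upper_def split: if_splits)
  finally have added: "col_toggle_from a b c (h c + 1) (ideal_of a h) = ideal_of a h'" .
  have "col_toggle_from a b c 1 (ideal_of a h) = ideal_of a h'"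
    by (rule col_toggle_from_idle[OF v' c _ _ _ added]) (use top in \<open>auto simp: h'_def\<close>)
  then show ?thesis by (simp add: col_toggle_eq_from h'_def)
qed

lemma col_toggle_drop:
  assumes v: "height_fn a b h" and c: "1 \<le> c" "c \<le> a" and full: "h c = upper b h c"
  shows "col_toggle a b c (ideal_of a h) = ideal_of a (h(c := h (c+1)))"
proof -
  have top: "h c \<le> b" and low: "h (c+1) \<le> h c"
    using upper_bounds[OF v c] height_fn_next_le[OF v c] by auto
  have above: "col_toggle_from a b c (h c + 1) (ideal_of a h) = ideal_of a h"
    by (rule col_toggle_from_idle[OF v c _ _ _ col_toggle_from_end])
      (use top full in \<open>auto simp: upper_def split: if_splits\<close>)
  have removing: "col_toggle_from a b c m (ideal_of a h) = ideal_of a (h(c := m - 1))"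
    if m: "h (c+1) + 1 \<le> m" "m \<le> h c + 1" for m
    using m(2,1)
  proof (induction rule: inc_induct)
    case base then show ?case using above by simp
  next
    case (step n)
    have n: "1 \<le> n" "n \<le> b" "h (c+1) + 1 \<le> n" using step(1,2) m(1) top by auto
    have vn: "height_fn a b (h(c := n))"
      by (rule height_fn_upd[OF v c n(2)]) (use full step(2) n in \<open>auto simp: upper_def split: if_splits\<close>)
    have "col_toggle_from a b c (Suc n) (ideal_of a h) = ideal_of a (h(c := Suc n - 1))"
      using step(3) n(3) by (simp add: fun_upd_def)
    then have "col_toggle_from a b c n (ideal_of a h) = toggle a b (c,n) (ideal_of a (h(c := n)))"
      using col_toggle_from_step[OF n(2), of a c] by (simp only: diff_Suc_1)
    also have "\<dots> = ideal_of a (h(c := n - 1))"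
      using toggle_ideal_of[OF vn c n(1,2)] n by simp
    finally show ?case .
  qed
  define h'' where "h'' = h(c := h (c+1))"
  have v'': "height_fn a b h''"
    using height_fn_col_step[OF v c] full by (simp add: col_step_def h''_def)
  have removed: "col_toggle_from a b c (h (c+1) + 1) (ideal_of a h) = ideal_of a h''"
    using removing[of "h (c+1) + 1"] low by (simp add: h''_def)
  have "c \<noteq> a" if "h (c+1) \<noteq> 0" using that height_fn_zero_beyond[OF v, of "c+1"] by auto
  then have "col_toggle_from a b c 1 (ideal_of a h) = ideal_of a h''"
    by (intro col_toggle_from_idle[OF v'' c _ _ _ removed]) (use top low in \<open>auto simp: h''_def\<close>)
  then show ?thesis by (simp add: col_toggle_eq_from h''_def)
qed

lemma col_toggle_ideal_of:
  assumes v: "height_fn a b h" and c: "1 \<le> c" "c \<le> a"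
  shows "col_toggle a b c (ideal_of a h) = ideal_of a (col_step b c h)"
  using col_toggle_raise[OF v c] col_toggle_drop[OF v c] upper_bounds(1)[OF v c]
  by (cases "h c < upper b h c") (auto simp: col_step_def)

section \<open>Comotion as the action of a word on heights\<close>

lemma foldr_comp_id: "foldr (\<lambda>c f. G c \<circ> f) xs g = foldr (\<lambda>c f. G c \<circ> f) xs id \<circ> g"
  by (induction xs) auto

lemma foldr_rev_fold: "foldr (\<lambda>c f. G c \<circ> f) (rev xs) id X = fold G xs X"
proof (induction xs arbitrary: X)
  case (Cons x xs)
  have "foldr (\<lambda>c f. G c \<circ> f) (rev (x # xs)) id X = foldr (\<lambda>c f. G c \<circ> f) (rev xs) (G x \<circ> id) X"
    by simp
  also have "\<dots> = foldr (\<lambda>c f. G c \<circ> f) (rev xs) id (G x X)"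
    by (subst foldr_comp_id) simp
  also have "\<dots> = fold G (x # xs) X" by (simp add: Cons.IH)
  finally show ?case .
qed simp

definition word_step :: "nat \<Rightarrow> nat list \<Rightarrow> (nat \<Rightarrow> nat) \<Rightarrow> (nat \<Rightarrow> nat)" where
  "word_step b w = fold (col_step b) w"

lemma word_step_Cons: "word_step b (c # w) h = word_step b w (col_step b c h)"
  by (simp add: word_step_def)

lemma word_step_snoc: "word_step b (w @ [c]) h = col_step b c (word_step b w h)"
  by (simp add: word_step_def)

lemma height_fn_word_step: "height_fn a b h \<Longrightarrow> set w \<subseteq> {1..a} \<Longrightarrow> height_fn a b (word_step b w h)"
  unfolding word_step_def
proof (induction w arbitrary: h)
  case (Cons c w) then show ?case using height_fn_col_step[of a b h c] by auto
qed simp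

lemma fold_col_toggle_ideal_of:
  "height_fn a b h \<Longrightarrow> set w \<subseteq> {1..a} \<Longrightarrow>
     fold (col_toggle a b) w (ideal_of a h) = ideal_of a (word_step b w h)"
proof (induction w arbitrary: h)
  case (Cons c w)
  then have c: "1 \<le> c" "c \<le> a" by auto
  then show ?case
    using Cons col_toggle_ideal_of[OF Cons(2) c] height_fn_col_step[OF Cons(2) c]
    by (simp add: word_step_Cons)
qed (simp add: word_step_def)

lemma comotion_ideal_of:
  assumes v: "height_fn a b h" and nu: "nu ` {1..a} \<subseteq> {1..a}"
  shows "comotion a b nu (ideal_of a h) = ideal_of a (word_step b (map nu [1..<a+1]) h)"
proof -
  have "comotion a b nu (ideal_of a h) = fold (\<lambda>c. col_toggle a b (nu c)) [1..<a+1] (ideal_of a h)"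
    unfolding comotion_def by (rule foldr_rev_fold)
  also have "\<dots> = fold (col_toggle a b) (map nu [1..<a+1]) (ideal_of a h)"
    by (simp add: fold_map comp_def)
  also have "\<dots> = ideal_of a (word_step b (map nu [1..<a+1]) h)"
    by (rule fold_col_toggle_ideal_of[OF v]) (use nu in auto)
  finally show ?thesis .
qed

lemma col_step_other: "d \<noteq> c \<Longrightarrow> col_step b c h d = h d"
  by (simp add: col_step_def)

text \<open>A column step can be undone: the old height of column c is recovered from the new one
  and the unchanged neighbours.\<close>
lemma col_step_inj:
  assumes vh: "height_fn a b h" and vg: "height_fn a b g" and c: "1 \<le> c" "c \<le> a"
    and eq: "col_step b c h = col_step b c g"
  shows "h = g"
proof -
  have other: "h d = g d" if "d \<noteq> c" for d
    using fun_cong[OF eq, of d] that by (simp add: col_step_other)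
  then have "upper b h c = upper b g c" "h (c+1) = g (c+1)" using c by (simp_all add: upper_def)
  moreover have "h (c+1) \<le> h c" "h c \<le> upper b h c" "g (c+1) \<le> g c" "g c \<le> upper b g c"
    using height_fn_next_le[OF vh c] upper_bounds[OF vh c]
      height_fn_next_le[OF vg c] upper_bounds[OF vg c] by auto
  moreover have "(if h c < upper b h c then h c + 1 else h (c+1)) =
      (if g c < upper b g c then g c + 1 else g (c+1))"
    using fun_cong[OF eq, of c] by (simp add: col_step_def)
  ultimately have "h c = g c" by (auto split: if_splits)
  with other show ?thesis by (metis ext)
qed

lemma word_step_inj:
  "height_fn a b h \<Longrightarrow> height_fn a b g \<Longrightarrow> set w \<subseteq> {1..a} \<Longrightarrow>
     word_step b w h = word_step b w g \<Longrightarrow> h = g"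
proof (induction w arbitrary: h g)
  case (Cons c w)
  have c: "1 \<le> c" "c \<le> a" using Cons.prems(3) by auto
  have "col_step b c h = col_step b c g"
    using Cons.IH[OF height_fn_col_step[OF Cons.prems(1) c] height_fn_col_step[OF Cons.prems(2) c]]
      Cons.prems(3,4) by (simp add: word_step_Cons)
  then show ?case using col_step_inj[OF Cons.prems(1,2) c] by simp
qed (simp add: word_step_def)

section \<open>Statistics whose sums over periods vanish\<close>

text \<open>f sums to zero over every period of T starting in V.  On a finite set on which T is
  injective this is equivalent to f being 0-mesic.\<close>
definition sums_vanish :: "'s set \<Rightarrow> ('s \<Rightarrow> 's) \<Rightarrow> ('s \<Rightarrow> real) \<Rightarrow> bool" where
  "sums_vanish V T f \<longleftrightarrow> (\<forall>h\<in>V. \<forall>n. (T ^^ n) h = h \<longrightarrow> (\<Sum>k<n. f ((T ^^ k) h)) = 0)"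

lemma periodic_sum_shift:
  fixes p :: "nat \<Rightarrow> 'a :: ab_group_add"
  assumes per: "\<And>k. p (k + n) = p k"
  shows "(\<Sum>k<n. p (k + K)) = (\<Sum>k<n. p k)"
proof (induction K)
  case (Suc K)
  have "(\<Sum>k<Suc n. p (k + K)) = p K + (\<Sum>k<n. p (k + Suc K))"
    by (subst sum.lessThan_Suc_shift) simp
  moreover have "(\<Sum>k<Suc n. p (k + K)) = (\<Sum>k<n. p (k + K)) + p K"
    using per[of K] by (simp add: add.commute)
  ultimately show ?case using Suc by (simp add: add.commute)
qed simp

lemma orbit_sum_shift:
  assumes "(T ^^ n) h = h"
  shows "(\<Sum>k<n. f ((T ^^ (k + K)) h)) = (\<Sum>k<n. f ((T ^^ k) h) :: real)"
  by (rule periodic_sum_shift) (use assms in \<open>simp add: funpow_add\<close>)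

lemma funpow_closed: "(\<And>h. h \<in> V \<Longrightarrow> T h \<in> V) \<Longrightarrow> h \<in> V \<Longrightarrow> (T ^^ n) h \<in> V"
  by (induction n) auto

lemma sums_vanish_coboundary:
  assumes sp: "sums_vanish V T f" and closed: "\<And>h. h \<in> V \<Longrightarrow> T h \<in> V"
    and eq: "\<And>h. h \<in> V \<Longrightarrow> g h = f h + (\<psi> (T h) - \<psi> h)"
  shows "sums_vanish V T g"
  unfolding sums_vanish_def
proof (intro ballI allI impI)
  fix h n assume h: "h \<in> V" and per: "(T ^^ n) h = h"
  have "(\<Sum>k<n. g ((T ^^ k) h)) =
      (\<Sum>k<n. f ((T ^^ k) h)) + (\<Sum>k<n. \<psi> ((T ^^ Suc k) h) - \<psi> ((T ^^ k) h))"
    using eq[OF funpow_closed[OF closed h]] by (simp add: sum.distrib)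
  also have "(\<Sum>k<n. \<psi> ((T ^^ Suc k) h) - \<psi> ((T ^^ k) h)) = \<psi> ((T ^^ n) h) - \<psi> h"
    by (subst sum_lessThan_telescope) simp
  finally show "(\<Sum>k<n. g ((T ^^ k) h)) = 0" using sp h per unfolding sums_vanish_def by simp
qed

lemma sums_vanish_conj:
  assumes sp: "sums_vanish V T1 (\<lambda>h. f (A h))"
    and T1: "\<And>h. T1 h = B (A h)" and T2: "\<And>h. T2 h = A (B h)"
    and closed: "\<And>h. h \<in> V \<Longrightarrow> B h \<in> V"
  shows "sums_vanish V T2 f"
  unfolding sums_vanish_def
proof (intro ballI allI impI)
  fix h n assume h: "h \<in> V" and per: "(T2 ^^ n) h = h"
  have comm: "(T1 ^^ k) (B h) = B ((T2 ^^ k) h)" for k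
    by (induction k) (simp_all add: T1 T2)
  then have "(T1 ^^ n) (B h) = B h" using per by simp
  then have "(\<Sum>k<n. f (A ((T1 ^^ k) (B h)))) = 0" using sp closed[OF h] unfolding sums_vanish_def by blast
  then have "(\<Sum>k<n. f ((T2 ^^ (k + 1)) h)) = 0" by (simp add: comm T2)
  then show "(\<Sum>k<n. f ((T2 ^^ k) h)) = 0" using orbit_sum_shift[OF per, of f 1] by simp
qed

lemma sums_vanish_delayed_coboundary:
  assumes closed: "\<And>h. h \<in> V \<Longrightarrow> T h \<in> V"
    and cob: "\<And>g. g \<in> V \<Longrightarrow> f ((T ^^ K) g) = \<phi> ((T ^^ K) g) - \<phi> g"
  shows "sums_vanish V T f"
  unfolding sums_vanish_def
proof (intro ballI allI impI)
  fix h n assume h: "h \<in> V" and per: "(T ^^ n) h = h"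
  have "(\<Sum>k<n. f ((T ^^ k) h)) = (\<Sum>k<n. f ((T ^^ (k + K)) h))"
    using orbit_sum_shift[OF per, of f K] by simp
  also have "\<dots> = (\<Sum>k<n. \<phi> ((T ^^ (k + K)) h) - \<phi> ((T ^^ k) h))"
  proof (rule sum.cong[OF refl])
    fix k
    have "(T ^^ (k + K)) h = (T ^^ K) ((T ^^ k) h)" by (simp add: funpow_add add.commute)
    then show "f ((T ^^ (k + K)) h) = \<phi> ((T ^^ (k + K)) h) - \<phi> ((T ^^ k) h)"
      using cob[OF funpow_closed[OF closed h, where n = k]] by simp
  qed
  also have "\<dots> = 0"
    using orbit_sum_shift[OF per, of \<phi> K] by (simp add: sum_subtractf)
  finally show "(\<Sum>k<n. f ((T ^^ k) h)) = 0" .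
qed

section \<open>Changing the order of the column toggles\<close>

definition two_col_stat :: "(nat \<Rightarrow> real) \<Rightarrow> (nat \<Rightarrow> real) \<Rightarrow> nat \<Rightarrow> nat \<Rightarrow> (nat \<Rightarrow> nat) \<Rightarrow> real" where
  "two_col_stat P R i i' g = P (g i) + R (g i')"

lemma word_step_other: "d \<notin> set w \<Longrightarrow> word_step b w h d = h d"
  unfolding word_step_def by (induction w arbitrary: h) (auto simp: col_step_other)

text \<open>Moving the first letter c of a word to the end conjugates the action by col_step c,
  and changes a two-column statistic by a coboundary, since only column c is affected by
  the conjugation.\<close>
lemma sums_vanish_rotate:
  assumes sp: "sums_vanish (Collect (height_fn a b)) (word_step b (w @ [c])) (two_col_stat P R i i')"
    and cw: "c \<notin> set w" and sub: "set (c # w) \<subseteq> {1..a}"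
  shows "sums_vanish (Collect (height_fn a b)) (word_step b (c # w)) (two_col_stat P R i i')"
proof (rule sums_vanish_conj[where A = "word_step b w" and B = "col_step b c"])
  define \<psi> where "\<psi> g = (if i = c then 0 else P (g i)) + (if i' = c then 0 else R (g i'))" for g
  show "sums_vanish (Collect (height_fn a b)) (word_step b (w @ [c]))
          (\<lambda>h. two_col_stat P R i i' (word_step b w h))"
  proof (rule sums_vanish_coboundary[OF sp])
    show "word_step b (w @ [c]) h \<in> Collect (height_fn a b)" if "h \<in> Collect (height_fn a b)" for h
      using height_fn_word_step that sub by auto
    fix h
    have "word_step b w h c = h c" using word_step_other[OF cw] .
    moreover have "word_step b (w @ [c]) h d = word_step b w h d" if "d \<noteq> c" for d
      using that by (simp add: word_step_snoc col_step_other)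
    ultimately show "two_col_stat P R i i' (word_step b w h) =
        two_col_stat P R i i' h + (\<psi> (word_step b (w @ [c]) h) - \<psi> h)"
      unfolding two_col_stat_def \<psi>_def by (cases "i = c"; cases "i' = c") auto
  qed
  show "\<And>h. word_step b (w @ [c]) h = col_step b c (word_step b w h)" by (rule word_step_snoc)
  show "\<And>h. word_step b (c # w) h = word_step b w (col_step b c h)" by (rule word_step_Cons)
  show "\<And>h. h \<in> Collect (height_fn a b) \<Longrightarrow> col_step b c h \<in> Collect (height_fn a b)"
    using height_fn_col_step sub by auto
qed

lemma col_step_comm:
  assumes "x \<noteq> s" "x \<noteq> s + 1" "s \<noteq> x + 1"
  shows "col_step b s (col_step b x h) = col_step b x (col_step b s h)"
proof -
  have "x - 1 \<noteq> s \<or> x = 1" "s - 1 \<noteq> x \<or> s = 1" using assms by auto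
  then show ?thesis using assms
    unfolding col_step_def upper_def by (intro ext) (auto simp: fun_upd_def)
qed

lemma word_step_comm:
  assumes "\<forall>x\<in>set u. x \<noteq> s \<and> x \<noteq> s + 1 \<and> s \<noteq> x + 1"
  shows "word_step b (u @ s # v) = word_step b (s # u @ v)"
proof -
  have "col_step b s (word_step b u h) = word_step b u (col_step b s h)" for h
    using assms
  proof (induction u arbitrary: h)
    case (Cons x u)
    then show ?case using col_step_comm[of x s b h] by (simp add: word_step_Cons)
  qed (simp add: word_step_def)
  then show ?thesis by (intro ext) (simp add: word_step_def)
qed

section \<open>Connecting all column orders to the standard one\<close>

fun pos :: "'a list \<Rightarrow> 'a \<Rightarrow> nat" where
  "pos [] x = 0"
| "pos (y # ys) x = (if x = y then 0 else Suc (pos ys x))"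

lemma pos_append: "pos (xs @ ys) x = (if x \<in> set xs then pos xs x else length xs + pos ys x)"
  by (induction xs) auto

lemma pos_less_length: "x \<in> set xs \<Longrightarrow> pos xs x < length xs"
  by (induction xs) auto

lemma pos_nth: "distinct xs \<Longrightarrow> i < length xs \<Longrightarrow> pos xs (xs ! i) = i"
proof (induction xs arbitrary: i)
  case (Cons y ys)
  then show ?case by (cases i) (auto simp: nth_mem)
qed simp

lemma pos_inj: "x \<in> set xs \<Longrightarrow> y \<in> set xs \<Longrightarrow> pos xs x = pos xs y \<Longrightarrow> x = y"
  by (induction xs) (auto split: if_splits)

lemma no_descent_sorted:
  assumes d: "distinct w" and sw: "set w = {1..a}"
    and inc: "\<And>c. 1 \<le> c \<Longrightarrow> c < a \<Longrightarrow> pos w c < pos w (c+1)"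
  shows "w = [1..<a+1]"
proof -
  have mono: "pos w x < pos w y" if "1 \<le> x" "x < y" "y \<le> a" for x y
    using that
  proof (induction y)
    case (Suc y)
    then show ?case using inc[of y] by (cases "x = y") (auto intro: less_trans)
  qed simp
  have "sorted w"
    unfolding sorted_iff_nth_mono_less
  proof (intro allI impI)
    fix i j assume ij: "i < j" "j < length w"
    show "w ! i \<le> w ! j"
    proof (rule ccontr)
      assume "\<not> w ! i \<le> w ! j"
      moreover have "w ! i \<in> {1..a}" "w ! j \<in> {1..a}" using ij sw nth_mem[of i w] nth_mem[of j w] by auto
      ultimately have "pos w (w ! j) < pos w (w ! i)" using mono by auto
      then show False using pos_nth[OF d, of i] pos_nth[OF d, of j] ij by simp
    qed
  qed
  moreover have "set [1..<a+1] = {1..a}" by auto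
  ultimately show ?thesis
    using d sw sorted_distinct_set_unique[of w "[1..<a+1]"] sorted_upt distinct_upt by metis
qed

lemma pos_after_iff:
  assumes "distinct (u @ s # v)" "y \<in> set (u @ s # v)"
  shows "pos (u @ s # v) s < pos (u @ s # v) y \<longleftrightarrow> y \<in> set v"
  using assms pos_less_length[of y u] by (auto simp: pos_append)

lemma pos_move_to_end:
  assumes "distinct (u @ s # v)" "x \<in> set (u @ s # v)" "y \<in> set (u @ s # v)" "x \<noteq> s"
  shows "pos (u @ v @ [s]) x < pos (u @ v @ [s]) y \<longleftrightarrow> y = s \<or> pos (u @ s # v) x < pos (u @ s # v) y"
  using assms pos_less_length[of x u] pos_less_length[of y u] pos_less_length[of x v]
    pos_less_length[of y v] by (auto simp: pos_append)

text \<open>The descents of an arrangement, weighted so that moving the letter above the largest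
  descent to the end strictly decreases the total weight.\<close>
definition disorder :: "nat \<Rightarrow> nat list \<Rightarrow> nat" where
  "disorder a w = (\<Sum>c\<in>{1..<a}. if pos w (c+1) < pos w c then a - c else 0)"

lemma disorder_move_to_end:
  assumes d: "distinct (u @ s # v)" and sw: "set (u @ s # v) = {1..a}"
    and s: "2 \<le> s" "s \<le> a" and below: "s - 1 \<in> set v" and above: "s < a \<Longrightarrow> s + 1 \<in> set v"
  shows "disorder a (u @ v @ [s]) < disorder a (u @ s # v)"
proof -
  define w where "w = u @ s # v"
  define w' where "w' = u @ v @ [s]"
  define t where "t w c = (if pos w (c+1) < pos w c then a - c else 0)" for w c
  have w_in: "c \<in> set w" if "1 \<le> c" "c \<le> a" for c using that sw by (auto simp: w_def)
  have reorder: "pos w' x < pos w' y \<longleftrightarrow> y = s \<or> pos w x < pos w y"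
    if "1 \<le> x" "x \<le> a" "1 \<le> y" "y \<le> a" "x \<noteq> s" for x y
    using pos_move_to_end[OF d w_in[unfolded w_def] w_in[unfolded w_def]] that by (simp add: w_def w'_def)
  have s_before: "pos w s < pos w y" if "y \<in> set v" for y
    using pos_after_iff[OF d] that by (simp add: w_def)
  have pointwise: "t w' c + (if c = s - 1 then t w c else 0) = t w c + (if c = s then t w' c else 0)"
    if c: "c \<in> {1..<a}" for c
  proof -
    consider "c = s - 1" | "c = s" | "c \<noteq> s - 1" "c \<noteq> s" by blast
    then show ?thesis
    proof cases
      case 1
      then have "c + 1 = s" "c \<noteq> s" using s by auto
      then show ?thesis using reorder[of c s] c by (simp add: t_def)
    next
      case 2
      then show ?thesis using s_before[OF above] c s by (simp add: t_def)
    next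
      case 3
      then show ?thesis using reorder[of "c+1" c] c by (auto simp: t_def)
    qed
  qed
  have "(\<Sum>c\<in>{1..<a}. t w' c + (if c = s - 1 then t w c else 0)) =
      (\<Sum>c\<in>{1..<a}. t w c + (if c = s then t w' c else 0))"
    by (rule sum.cong[OF refl pointwise])
  moreover have "disorder a x = (\<Sum>c\<in>{1..<a}. t x c)" for x by (simp add: disorder_def t_def)
  moreover have "s - 1 \<in> {1..<a}" "1 \<le> s" using s by auto
  ultimately have "disorder a w' + t w (s - 1) = disorder a w + (if s < a then t w' s else 0)"
    by (simp add: sum.distrib)
  moreover have "t w (s - 1) = a - (s - 1)" using s_before[OF below] s by (simp add: t_def)
  moreover have "t w' s \<le> a - s" by (simp add: t_def)
  ultimately show ?thesis using s by (simp add: w_def w'_def split: if_splits)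
qed

text \<open>An unsorted arrangement has a letter s (above its largest descent) that precedes both
  s - 1 and s + 1.\<close>
lemma unsorted_has_movable:
  assumes d: "distinct w" and sw: "set w = {1..a}" and unsorted: "w \<noteq> [1..<a+1]"
  obtains u s v where "w = u @ s # v" "2 \<le> s" "s \<le> a" "s - 1 \<in> set v" "s < a \<Longrightarrow> s + 1 \<in> set v"
proof -
  define B where "B = {c \<in> {1..<a}. pos w (c+1) < pos w c}"
  have "B \<noteq> {}"
  proof
    assume "B = {}"
    then have "pos w c < pos w (c+1)" if "1 \<le> c" "c < a" for c
      using that pos_inj[of c w "c+1"] sw by (force simp: B_def)
    then show False using no_descent_sorted[OF d sw] unsorted by blast
  qed
  define s where "s = Max B + 1"
  have "finite B" by (simp add: B_def)
  then have maxB: "Max B \<in> B" "\<And>c. c \<in> B \<Longrightarrow> c \<le> Max B" using \<open>B \<noteq> {}\<close> by auto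
  then have s: "2 \<le> s" "s \<le> a" by (auto simp: B_def s_def)
  then have s_in: "s \<in> set w" using sw by auto
  define u where "u = take (pos w s) w"
  define v where "v = drop (Suc (pos w s)) w"
  have split: "w = u @ s # v"
    using id_take_nth_drop[OF pos_less_length[OF s_in]] pos_nth[OF d pos_less_length[OF s_in]]
      pos_inj[OF nth_mem[OF pos_less_length[OF s_in]] s_in]
    by (simp add: u_def v_def)
  have after: "x \<in> set v" if "x \<in> set w" "pos w s < pos w x" for x
    using pos_after_iff[of u s v x] d that by (simp add: split[symmetric])
  show ?thesis
  proof (rule that[OF split s])
    have "pos w s < pos w (s - 1)" using maxB(1) by (simp add: B_def s_def)
    moreover have "s - 1 \<in> set w" using sw s by auto
    ultimately show "s - 1 \<in> set v" using after by blast
    assume "s < a"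
    then have "s \<notin> B" using maxB(2)[of s] by (auto simp: s_def)
    moreover have "pos w s \<noteq> pos w (s+1)" using pos_inj[of s w "s+1"] sw s \<open>s < a\<close> by auto
    ultimately show "s + 1 \<in> set v" using after[of "s+1"] sw s \<open>s < a\<close> by (auto simp: B_def)
  qed
qed

lemma arrangement_induct:
  assumes base: "Qp [1..<a+1]"
    and rotate: "\<And>w c. distinct (c # w) \<Longrightarrow> set (c # w) = {1..a} \<Longrightarrow> Qp (w @ [c]) \<Longrightarrow> Qp (c # w)"
    and comm: "\<And>u s v. (\<forall>x\<in>set u. x \<noteq> s \<and> x \<noteq> s + 1 \<and> s \<noteq> x + 1) \<Longrightarrow> Qp (s # u @ v) \<Longrightarrow> Qp (u @ s # v)"
  shows "distinct w \<Longrightarrow> set w = {1..a} \<Longrightarrow> Qp w"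
proof (induction "disorder a w" arbitrary: w rule: less_induct)
  case less
  show ?case
  proof (cases "w = [1..<a+1]")
    case False
    then obtain u s v where w: "w = u @ s # v" and s: "2 \<le> s" "s \<le> a" "s - 1 \<in> set v"
      and s': "s < a \<Longrightarrow> s + 1 \<in> set v"
      using unsorted_has_movable[OF less.prems] by blast
    have "disorder a (u @ v @ [s]) < disorder a w"
      using disorder_move_to_end[of u s v a] less.prems s s' by (simp add: w)
    moreover have "distinct (u @ v @ [s])" "set (u @ v @ [s]) = {1..a}" using less.prems w by auto
    ultimately have "Qp (u @ v @ [s])" by (rule less.hyps)
    then have "Qp (s # u @ v)" using rotate[of s "u @ v"] less.prems by (auto simp: w)
    moreover have "\<forall>x\<in>set u. x \<noteq> s \<and> x \<noteq> s + 1 \<and> s \<noteq> x + 1"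
    proof
      fix x assume x: "x \<in> set u"
      have "x \<notin> set v" "x \<noteq> s" "x \<le> a" using x less.prems w by auto
      then show "x \<noteq> s \<and> x \<noteq> s + 1 \<and> s \<noteq> x + 1" using s s' by (cases "s < a") auto
    qed
    ultimately show ?thesis using comm w by blast
  qed (use base in simp)
qed

section \<open>The standard comotion\<close>

text \<open>The number of columns c whose height reaches b + c - m, i.e. whose top lies on or
  beyond the m-th anti-diagonal.  Since heights decrease, these columns form an initial
  segment, so this single number tells which columns reach the diagonal.\<close>
definition reach_count :: "nat \<Rightarrow> nat \<Rightarrow> (nat \<Rightarrow> nat) \<Rightarrow> nat \<Rightarrow> int" where
  "reach_count a b h m = (\<Sum>c = 1..a. if b + c \<le> m + h c then 1 else 0)"

lemma reach_count_card: "reach_count a b h m = int (card {c \<in> {1..a}. b + c \<le> m + h c})"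
  unfolding reach_count_def by (simp add: sum.inter_filter[symmetric])

lemma reach_count_ge:
  assumes v: "height_fn a b h" and i: "1 \<le> i" "i \<le> a"
  shows "int i \<le> reach_count a b h m \<longleftrightarrow> b + i \<le> m + h i"
proof -
  define S where "S = {c \<in> {1..a}. b + c \<le> m + h c}"
  have sub: "S \<subseteq> {1..a}" by (auto simp: S_def)
  have Seq: "S = {1..card S}"
  proof (rule downclosed_is_interval[OF sub])
    fix x y assume x: "x \<in> S" and y: "1 \<le> y" "y \<le> x"
    then have "h x \<le> h y" using height_fn_mono[OF v, of y x] by (auto simp: S_def)
    then show "y \<in> S" using x y by (auto simp: S_def)
  qed
  have "i \<in> S \<longleftrightarrow> i \<le> card S"
  proof -
    have "i \<in> {1..card S} \<longleftrightarrow> i \<le> card S" using i by simp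
    then show ?thesis using Seq by blast
  qed
  moreover have "i \<in> S \<longleftrightarrow> b + i \<le> m + h i" using i by (simp add: S_def)
  moreover have "reach_count a b h m = int (card S)" by (simp add: reach_count_card S_def)
  ultimately show ?thesis by simp
qed

lemma reach_count_zero:
  assumes v: "height_fn a b h"
  shows "reach_count a b h 0 = 0"
  unfolding reach_count_def
proof (intro sum.neutral ballI)
  fix c assume c: "c \<in> {1..a}"
  have "h c \<le> b" using height_fn_bound[OF v] .
  then have "\<not> b + c \<le> 0 + h c" using c by simp
  then show "(if b + c \<le> 0 + h c then 1 else 0) = (0::int)" by simp
qed

lemma reach_count_full: "reach_count a b h (a + b) = int a"
proof -
  have "reach_count a b h (a + b) = (\<Sum>c = 1..a. (1::int))"
    unfolding reach_count_def by (rule sum.cong) auto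
  then show ?thesis by simp
qed

lemma reach_count_one:
  assumes v: "height_fn a b h" and a: "1 \<le> a"
  shows "reach_count a b h 1 = (if h 1 = b then 1 else 0)"
proof -
  have "reach_count a b h 1 = (\<Sum>c = 1..a. if c = 1 then (if h 1 = b then 1 else 0) else 0)"
    unfolding reach_count_def
  proof (rule sum.cong)
    fix c assume c: "c \<in> {1..a}"
    have "h c \<le> b" using height_fn_bound[OF v] .
    then show "(if b + c \<le> 1 + h c then 1 else 0) = (if c = 1 then (if h 1 = b then 1 else 0) else (0::int))"
      using c by auto
  qed simp
  then show ?thesis using a by simp
qed

definition std_comotion :: "nat \<Rightarrow> nat \<Rightarrow> (nat \<Rightarrow> nat) \<Rightarrow> (nat \<Rightarrow> nat)" where
  "std_comotion a b = word_step b [1..<a+1]"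

lemma std_raise_prefix:
  assumes v: "height_fn a b h" and h1: "h 1 < b"
  shows "m \<le> a \<Longrightarrow> fold (col_step b) [1..<m+1] h = (\<lambda>c. if 1 \<le> c \<and> c \<le> m then h c + 1 else h c)"
proof (induction m)
  case 0 then show ?case by (auto intro!: ext)
next
  case (Suc m)
  define g where "g = (\<lambda>c. if 1 \<le> c \<and> c \<le> m then h c + 1 else h c)"
  have IH: "fold (col_step b) [1..<m+1] h = g" using Suc by (simp add: g_def)
  have "[1..<Suc m + 1] = [1..<m+1] @ [m+1]" by simp
  then have "fold (col_step b) [1..<Suc m+1] h = col_step b (m+1) (fold (col_step b) [1..<m+1] h)" by (simp del: upt_Suc)
  then have F: "fold (col_step b) [1..<Suc m+1] h = col_step b (m+1) g" using IH by simp
  moreover have "g (m+1) < upper b g (m+1)"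
  proof (cases "m = 0")
    case True then show ?thesis using h1 by (simp add: g_def upper_def)
  next
    case False
    then have "h (m+1) \<le> h m" using height_fn_mono[OF v, of m "m+1"] Suc by simp
    then show ?thesis using False by (simp add: g_def upper_def)
  qed
  then show ?case unfolding F by (auto simp: col_step_def g_def intro!: ext)
qed

lemma std_shift_prefix:
  assumes v: "height_fn a b h" and h1: "h 1 = b"
  shows "m \<le> a \<Longrightarrow> fold (col_step b) [1..<m+1] h = (\<lambda>c. if 1 \<le> c \<and> c \<le> m then h (c + 1) else h c)"
proof (induction m)
  case 0 then show ?case by (auto intro!: ext)
next
  case (Suc m)
  define g where "g = (\<lambda>c. if 1 \<le> c \<and> c \<le> m then h (c + 1) else h c)"
  have IH: "fold (col_step b) [1..<m+1] h = g" using Suc by (simp add: g_def)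
  have "[1..<Suc m + 1] = [1..<m+1] @ [m+1]" by simp
  then have "fold (col_step b) [1..<Suc m+1] h = col_step b (m+1) (fold (col_step b) [1..<m+1] h)" by (simp del: upt_Suc)
  then have F: "fold (col_step b) [1..<Suc m+1] h = col_step b (m+1) g" using IH by simp
  moreover have "\<not> g (m+1) < upper b g (m+1)"
  proof (cases "m = 0")
    case True then show ?thesis using h1 by (simp add: g_def upper_def)
  next
    case False
    then show ?thesis by (simp add: g_def upper_def)
  qed
  then show ?case unfolding F by (auto simp: col_step_def g_def intro!: ext)
qed

lemma std_comotion_raise:
  assumes v: "height_fn a b h" and h1: "h 1 < b"
  shows "std_comotion a b h = (\<lambda>c. if 1 \<le> c \<and> c \<le> a then h c + 1 else h c)"
  using std_raise_prefix[OF v h1, of a] by (simp add: std_comotion_def word_step_def)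

lemma std_comotion_shift:
  assumes v: "height_fn a b h" and h1: "h 1 = b"
  shows "std_comotion a b h = (\<lambda>c. if 1 \<le> c \<and> c \<le> a then h (c + 1) else h c)"
  using std_shift_prefix[OF v h1, of a] by (simp add: std_comotion_def word_step_def)

lemma height_fn_std: "height_fn a b h \<Longrightarrow> height_fn a b (std_comotion a b h)"
  unfolding std_comotion_def by (rule height_fn_word_step) auto

lemma reach_count_std:
  assumes v: "height_fn a b h" and a: "1 \<le> a" and m: "m + 1 \<le> a + b"
  shows "reach_count a b (std_comotion a b h) m = reach_count a b h (m+1) - reach_count a b h 1"
proof (cases "h 1 < b")
  case True
  have "reach_count a b (std_comotion a b h) m = reach_count a b h (m+1)"
    unfolding reach_count_def std_comotion_raise[OF v True] by (rule sum.cong) auto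
  then show ?thesis using reach_count_one[OF v a] True by simp
next
  case False
  then have h1: "h 1 = b" using height_fn_bound[OF v, of 1] by simp
  obtain a' where a': "a = Suc a'" using a by (cases a) auto
  define G where "G c = (if b + c \<le> m + h (c+1) then 1 else (0::int))" for c
  have "reach_count a b (std_comotion a b h) m = (\<Sum>c = 1..a. G c)"
    unfolding reach_count_def std_comotion_shift[OF v h1] G_def by (rule sum.cong) auto
  also have "\<dots> = (\<Sum>c = 1..a'. G c) + G a" using a' by (simp add: sum.cl_ivl_Suc)
  also have "G a = 0" using m height_fn_zero_beyond[OF v, of "a+1"] by (simp add: G_def)
  finally have L: "reach_count a b (std_comotion a b h) m = (\<Sum>c = 1..a'. G c)" by simp
  have "reach_count a b h (m+1) = (if b + 1 \<le> m + 1 + h 1 then 1 else 0) + (\<Sum>c = Suc 1..Suc a'. if b + c \<le> m + 1 + h c then 1 else 0)"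
    unfolding reach_count_def using a' by (simp add: sum.atLeast_Suc_atMost)
  also have "(\<Sum>c = Suc 1..Suc a'. if b + c \<le> m + 1 + h c then 1 else (0::int)) = (\<Sum>c = 1..a'. G c)"
    unfolding sum.shift_bounds_cl_Suc_ivl G_def by (rule sum.cong) auto
  finally have "reach_count a b h (m+1) = 1 + (\<Sum>c = 1..a'. G c)" using h1 by simp
  then show ?thesis using L reach_count_one[OF v a] h1 by simp
qed

lemma reach_count_iter:
  assumes a: "1 \<le> a"
  shows "height_fn a b h \<Longrightarrow> m + k \<le> a + b \<Longrightarrow>
    reach_count a b ((std_comotion a b ^^ k) h) m = reach_count a b h (m+k) - reach_count a b h k"
proof (induction k arbitrary: h)
  case 0 then show ?case using reach_count_zero by simp
next
  case (Suc k)
  have vT: "height_fn a b (std_comotion a b h)" using height_fn_std[OF Suc(2)] .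
  have "reach_count a b ((std_comotion a b ^^ Suc k) h) m = reach_count a b ((std_comotion a b ^^ k) (std_comotion a b h)) m"
    by (simp only: funpow_Suc_right comp_apply)
  also have "\<dots> = reach_count a b (std_comotion a b h) (m+k) - reach_count a b (std_comotion a b h) k" using Suc.IH[OF vT] Suc(3) by simp
  also have "\<dots> = reach_count a b h (m + Suc k) - reach_count a b h (Suc k)"
    using reach_count_std[OF Suc(2) a, of "m+k"] reach_count_std[OF Suc(2) a, of k] Suc(3) by simp
  finally show ?case .
qed

lemma key_identity:
  assumes v: "height_fn a b h" and i: "1 \<le> i" "i \<le> a" and j: "1 \<le> j" "j \<le> b"
  shows "(b + 1 - j \<le> ((std_comotion a b ^^ (i + b - j)) h) (a + 1 - i)) \<longleftrightarrow> \<not> (j \<le> h i)"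
proof -
  define K where "K = i + b - j"
  define g where "g = (std_comotion a b ^^ K) h"
  have vg: "height_fn a b g" unfolding g_def by (induction K) (auto simp: v height_fn_std)
  define m where "m = a + j - i"
  have a1: "1 \<le> a" using i by simp
  have i': "1 \<le> a + 1 - i" "a + 1 - i \<le> a" using i by auto
  have mK: "m + K = a + b" using i j by (simp add: m_def K_def)
  have "(b + 1 - j \<le> g (a + 1 - i)) \<longleftrightarrow> (b + (a + 1 - i) \<le> m + g (a + 1 - i))"
    using i j by (simp add: m_def) arith
  also have "\<dots> \<longleftrightarrow> int (a + 1 - i) \<le> reach_count a b g m" using reach_count_ge[OF vg i'] by simp
  also have "reach_count a b g m = int a - reach_count a b h K"
    using reach_count_iter[OF a1 v, of m K] mK reach_count_full[of a b h] by (simp add: g_def)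
  also have "(int (a + 1 - i) \<le> int a - reach_count a b h K) \<longleftrightarrow> \<not> (int i \<le> reach_count a b h K)" using i by auto
  also have "(int i \<le> reach_count a b h K) \<longleftrightarrow> b + i \<le> K + h i" using reach_count_ge[OF v i] .
  also have "(b + i \<le> K + h i) \<longleftrightarrow> j \<le> h i" using j by (simp add: K_def) arith
  finally show ?thesis by (simp add: g_def K_def)
qed

definition antipodal_stat :: "nat \<Rightarrow> nat \<Rightarrow> nat \<Rightarrow> nat \<Rightarrow> (nat \<Rightarrow> nat) \<Rightarrow> real" where
  "antipodal_stat a b i j = two_col_stat (\<lambda>y. if j \<le> y then 1 else 0)
     (\<lambda>y. (if b + 1 - j \<le> y then 1 else 0) - 1) i (a + 1 - i)"

text \<open>By the key identity the statistic, evaluated i + b - j steps later, is a coboundary.\<close>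
lemma sums_vanish_std:
  assumes i: "1 \<le> i" "i \<le> a" and j: "1 \<le> j" "j \<le> b"
  shows "sums_vanish (Collect (height_fn a b)) (std_comotion a b) (antipodal_stat a b i j)"
proof (rule sums_vanish_delayed_coboundary)
  show "\<And>h. h \<in> Collect (height_fn a b) \<Longrightarrow> std_comotion a b h \<in> Collect (height_fn a b)"
    using height_fn_std by blast
  fix g assume "g \<in> Collect (height_fn a b)"
  then show "antipodal_stat a b i j ((std_comotion a b ^^ (i + b - j)) g) =
      (\<lambda>g. if j \<le> g i then 1 else 0) ((std_comotion a b ^^ (i + b - j)) g) -
      (\<lambda>g. if j \<le> g i then 1 else 0) g"
    using key_identity[of a b g i j] i j by (simp add: antipodal_stat_def two_col_stat_def)
qed

lemma sums_vanish_word: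
  assumes i: "1 \<le> i" "i \<le> a" and j: "1 \<le> j" "j \<le> b"
    and w: "distinct w" "set w = {1..a}"
  shows "sums_vanish (Collect (height_fn a b)) (word_step b w) (antipodal_stat a b i j)"
proof (rule arrangement_induct[OF _ _ _ w])
  show "sums_vanish (Collect (height_fn a b)) (word_step b [1..<a+1]) (antipodal_stat a b i j)"
    using sums_vanish_std[OF i j] by (simp add: std_comotion_def)
next
  fix w c assume "distinct (c # w)" "set (c # w) = {1..a}"
    and "sums_vanish (Collect (height_fn a b)) (word_step b (w @ [c])) (antipodal_stat a b i j)"
  then show "sums_vanish (Collect (height_fn a b)) (word_step b (c # w)) (antipodal_stat a b i j)"
    unfolding antipodal_stat_def by (intro sums_vanish_rotate) auto
next
  fix u s v assume "\<forall>x\<in>set u. x \<noteq> s \<and> x \<noteq> s + 1 \<and> s \<noteq> x + 1"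
    and "sums_vanish (Collect (height_fn a b)) (word_step b (s # u @ v)) (antipodal_stat a b i j)"
  then show "sums_vanish (Collect (height_fn a b)) (word_step b (u @ s # v)) (antipodal_stat a b i j)"
    by (simp add: word_step_comm)
qed

section \<open>From sums over periods to orbit averages\<close>

lemma finite_inj_on_periodic:
  assumes fin: "finite V" and closed: "\<And>h. h \<in> V \<Longrightarrow> T h \<in> V" and inj: "inj_on T V"
    and h: "h \<in> V"
  obtains p where "0 < p" "(T ^^ p) h = h"
proof -
  define T' where "T' x = (if x \<in> V then T x else x)" for x
  have "inj T'"
    using inj closed by (auto simp: T'_def inj_on_def)
  have agree: "(T' ^^ n) h = (T ^^ n) h" for n
    by (induction n) (simp_all add: T'_def funpow_closed[OF closed h])
  then have "{y. \<exists>n. y = (T' ^^ n) h} \<subseteq> V"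
    using funpow_closed[OF closed h] by auto
  then have "finite {y. \<exists>n. y = (T' ^^ n) h}" using fin finite_subset by blast
  then obtain p where "0 < p" "(T' ^^ p) h = h" using funpow_inj_finite[OF \<open>inj T'\<close>] by blast
  then show ?thesis using that agree by simp
qed

text \<open>For an injective self-map of a finite set, vanishing sums over periods mean that the
  statistic is 0-mesic: each orbit is traversed exactly once by a minimal period.\<close>
lemma zero_mesic_if_sums_vanish:
  assumes fin: "finite V" and closed: "\<And>h. h \<in> V \<Longrightarrow> T h \<in> V" and inj: "inj_on T V"
    and sv: "sums_vanish V T f"
  shows "zero_mesic T V f"
  unfolding zero_mesic_def
proof
  fix h assume h: "h \<in> V"
  define p where "p = (LEAST p. 0 < p \<and> (T ^^ p) h = h)"
  obtain q where "0 < q" "(T ^^ q) h = h" by (rule finite_inj_on_periodic[OF fin closed inj h])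
  then have p: "0 < p" "(T ^^ p) h = h" and minimal: "\<And>m. 0 < m \<Longrightarrow> m < p \<Longrightarrow> (T ^^ m) h \<noteq> h"
    using LeastI[of "\<lambda>p. 0 < p \<and> (T ^^ p) h = h" q] not_less_Least[of _ "\<lambda>p. 0 < p \<and> (T ^^ p) h = h"]
    by (auto simp: p_def)
  have orbit: "orbit_of T h = (\<lambda>k. (T ^^ k) h) ` {0..<p}"
    unfolding orbit_of_def using p funpow_mod_eq[OF p(2)]
    by (auto intro!: image_eqI[where x = "k mod p" for k])
  have "(\<Sum>t\<in>orbit_of T h. f t) = (\<Sum>k<p. f ((T ^^ k) h))"
    unfolding orbit using sum.reindex[OF inj_on_funpow_least[OF p(2) minimal]]
    by (simp add: atLeast0LessThan)
  also have "\<dots> = 0" using sv h p(2) by (simp add: sums_vanish_def)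
  finally show "(\<Sum>t\<in>orbit_of T h. f t) / real (card (orbit_of T h)) = 0" by simp
qed

lemma zero_mesic_conj:
  assumes zm: "zero_mesic T' V f'" and bij: "bij_betw H V S"
    and closed: "\<And>g. g \<in> V \<Longrightarrow> T' g \<in> V"
    and intertwine: "\<And>g. g \<in> V \<Longrightarrow> T (H g) = H (T' g)"
    and stat: "\<And>g. g \<in> V \<Longrightarrow> f (H g) = f' g"
  shows "zero_mesic T S f"
  unfolding zero_mesic_def
proof
  fix s assume "s \<in> S"
  then obtain g where g: "g \<in> V" "s = H g" using bij by (auto simp: bij_betw_def)
  have "(T ^^ k) (H g) = H ((T' ^^ k) g)" for k
    by (induction k) (simp_all add: intertwine funpow_closed[OF closed g(1)])
  then have orbit: "orbit_of T s = H ` orbit_of T' g" by (auto simp: orbit_of_def g(2))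
  have sub: "orbit_of T' g \<subseteq> V" using funpow_closed[OF closed g(1)] by (auto simp: orbit_of_def)
  then have inj: "inj_on H (orbit_of T' g)" using bij by (auto simp: bij_betw_def intro: inj_on_subset)
  have "(\<Sum>t\<in>orbit_of T s. f t) = (\<Sum>t\<in>orbit_of T' g. f (H t))"
    unfolding orbit by (rule sum.reindex[OF inj, unfolded comp_def])
  also have "\<dots> = (\<Sum>t\<in>orbit_of T' g. f' t)" using stat sub by (intro sum.cong) auto
  moreover have "card (orbit_of T s) = card (orbit_of T' g)" unfolding orbit by (rule card_image[OF inj])
  ultimately show "(\<Sum>t\<in>orbit_of T s. f t) / real (card (orbit_of T s)) = 0"
    using zm g(1) by (simp add: zero_mesic_def)
qed

lemma bij_betw_ideal_of: "bij_betw (ideal_of a) (Collect (height_fn a b)) (J a b)"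
  unfolding bij_betw_def inj_on_def J_def
  using ideal_of_inj ideal_of_is_ideal ideal_is_ideal_of by blast

lemma statistic_ideal_of:
  assumes h: "height_fn a b h" and i: "1 \<le> i" "i \<le> a" and j: "1 \<le> j" "j \<le> b"
  shows "ind (ideal_of a h) (i,j) - (1 - ind (ideal_of a h) (antipode a b (i,j))) = antipodal_stat a b i j h"
proof -
  have "1 \<le> a + 1 - i" "a + 1 - i \<le> a" "1 \<le> b + 1 - j" using i j by auto
  then show ?thesis using i j by (simp add: ind_def antipode_def antipodal_stat_def two_col_stat_def)
qed

theorem mainTheorem11:
  fixes a b :: nat and nu :: "nat \<Rightarrow> nat" and x :: "nat \<times> nat"
  assumes "a \<ge> 1" and "b \<ge> 1"
    and "nu permutes {1..a}"
    and "x \<in> Q a b"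
  shows "zero_mesic (comotion a b nu) (J a b)
           (\<lambda>I. ind I x - (1 - ind I (antipode a b x)))"
proof -
  obtain i j where x: "x = (i,j)" and i: "1 \<le> i" "i \<le> a" and j: "1 \<le> j" "j \<le> b"
    using assms(4) by (cases x) (auto simp: Q_def)
  define w where "w = map nu [1..<a+1]"
  have nu: "nu ` {1..a} = {1..a}" using permutes_image[OF assms(3)] .
  have cols: "set [1..<a+1] = {1..a}" by auto
  have w: "distinct w" "set w = {1..a}"
    unfolding w_def distinct_map set_map cols using permutes_inj_on[OF assms(3)] nu by simp_all
  have closed: "\<And>h. h \<in> Collect (height_fn a b) \<Longrightarrow> word_step b w h \<in> Collect (height_fn a b)"
    using height_fn_word_step w by auto
  have "inj_on (word_step b w) (Collect (height_fn a b))"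
    using word_step_inj[of a b _ _ w] w by (auto simp: inj_on_def)
  then have "zero_mesic (word_step b w) (Collect (height_fn a b)) (antipodal_stat a b i j)"
    using zero_mesic_if_sums_vanish[OF finite_height_fns closed _ sums_vanish_word[OF i j w]] by blast
  then show ?thesis
    by (rule zero_mesic_conj[OF _ bij_betw_ideal_of closed])
      (use comotion_ideal_of nu statistic_ideal_of i j in \<open>auto simp: x w_def\<close>)
qed

end
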